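(* Let $\gamma>0$, let $\Pi\subseteq\mathbb R^d$ be closed and convex with $0\in\Pi$, let $\theta:\mathbb R^d\to\mathbb R^d$, and define $F(v,z):=\frac12\gamma^2\,\mathrm{dist}^2\{\Pi,\frac{z+\theta(v)}{\gamma}\}-\frac12|z+\theta(v)|^2+\frac12|z|^2$, $G(v,z,\bar z):=\frac1\gamma(F(v,z+\gamma\bar z)-F(v,z))$, and $G^*(v,z,q):=\sup_{\bar z\in\mathbb R^d}(\bar z^{tr}q-G(v,z,\bar z))\in\mathbb R\cup\{\infty\}$. Then: (i) for all $v,z,\bar z\in\mathbb R^d$, $$-\gamma|\bar z|^2-\frac2\gamma(|z|^2+|\theta(v)|^2)\le G(v,z,\bar z)\le\gamma|\bar z|^2+\frac2\gamma(|z|^2+|\theta(v)|^2);$$ (ii) for every $(v,z)$, $q\mapsto G^*(v,z,q)$ is convex; (iii) for all $v,z,q\in\mathbb R^d$, $$G^*(v,z,q)\ge\max\Big\{0,\ \frac{|q|^2}{4\gamma}-\frac2\gamma(|z|^2+|\theta(v)|^2)\Big\}.$$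
   Context: $\mathrm{dist}\{\Pi,x\}$ denotes the Euclidean distance from $x\in\mathbb R^d$ to the set $\Pi$. *)

theory Defs
  imports "HOL-Analysis.Analysis"
begin

definition F_fun :: "real \<Rightarrow> 'a::euclidean_space set \<Rightarrow> ('a \<Rightarrow> 'a) \<Rightarrow> 'a \<Rightarrow> 'a \<Rightarrow> real" where
  "F_fun \<gamma> Pi_set \<theta> v z =
     1/2 * \<gamma>^2 * (infdist ((1/\<gamma>) *\<^sub>R (z + \<theta> v)) Pi_set)^2
     - 1/2 * (norm (z + \<theta> v))^2 + 1/2 * (norm z)^2"

definition G_fun :: "real \<Rightarrow> 'a::euclidean_space set \<Rightarrow> ('a \<Rightarrow> 'a) \<Rightarrow> 'a \<Rightarrow> 'a \<Rightarrow> 'a \<Rightarrow> real" where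
  "G_fun \<gamma> Pi_set \<theta> v z zb = (F_fun \<gamma> Pi_set \<theta> v (z + \<gamma> *\<^sub>R zb) - F_fun \<gamma> Pi_set \<theta> v z) / \<gamma>"

definition Gstar_fun :: "real \<Rightarrow> 'a::euclidean_space set \<Rightarrow> ('a \<Rightarrow> 'a) \<Rightarrow> 'a \<Rightarrow> 'a \<Rightarrow> 'a \<Rightarrow> ereal" where
  "Gstar_fun \<gamma> Pi_set \<theta> v z q = (SUP zb. ereal (zb \<bullet> q - G_fun \<gamma> Pi_set \<theta> v z zb))"

definition ereal_convex_fun :: "('a::real_vector \<Rightarrow> ereal) \<Rightarrow> bool" where
  "ereal_convex_fun f \<longleftrightarrow> convex {(x, r::real). f x \<le> ereal r}"

end

theory Submission
  imports Defs
begin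

text \<open>Since \<open>0 \<in> \<Pi>\<close>, the distance term of \<open>F\<close> lies between \<open>0\<close> and \<open>|z + \<theta> v|\<^sup>2\<close>,
  so \<open>F(v, \<cdot>)\<close> is squeezed between two quadratics in \<open>z\<close> and \<open>\<theta> v\<close>; Young's inequality
  then bounds the increments of \<open>F\<close>, which is (i). Part (ii) holds for the conjugate of any
  function, as its epigraph is an intersection of half-spaces, and (iii) follows by testing
  the supremum at \<open>0\<close> (where \<open>G\<close> vanishes) and at \<open>q / (2\<gamma>)\<close>, using the upper bound in (i).\<close>

definition convex_conjugate :: "('a::real_inner \<Rightarrow> real) \<Rightarrow> 'a \<Rightarrow> ereal" where
  "convex_conjugate f q = (SUP x. ereal (x \<bullet> q - f x))"

lemma convex_conjugate_ge: "ereal (x \<bullet> q - f x) \<le> convex_conjugate f q"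
  unfolding convex_conjugate_def by (rule SUP_upper) simp

lemma ereal_convex_fun_convex_conjugate: "ereal_convex_fun (convex_conjugate f)"
proof -
  have "{(q, r). convex_conjugate f q \<le> ereal r} = (\<Inter>x. {p. (x, -1) \<bullet> p \<le> f x})"
    by (auto simp: convex_conjugate_def SUP_le_iff algebra_simps)
  then show ?thesis
    unfolding ereal_convex_fun_def by (simp add: convex_INT convex_halfspace_le)
qed

lemma convex_conjugate_nonneg:
  assumes "f 0 \<le> 0"
  shows "0 \<le> convex_conjugate f q"
proof -
  have "ereal 0 \<le> ereal (0 \<bullet> q - f 0)"
    using assms by simp
  then show ?thesis
    using convex_conjugate_ge order_trans by (metis zero_ereal_def)
qed

lemma convex_conjugate_ge_quadratic:
  assumes "c > 0" and "\<And>x. f x \<le> c * (norm x)\<^sup>2 + b"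
  shows "ereal ((norm q)\<^sup>2 / (4 * c) - b) \<le> convex_conjugate f q"
proof -
  let ?x = "(1 / (2 * c)) *\<^sub>R q"
  have "(norm q)\<^sup>2 / (4 * c) - b = ?x \<bullet> q - (c * (norm ?x)\<^sup>2 + b)"
    using assms(1) by (simp add: dot_square_norm field_simps power2_eq_square)
  also have "\<dots> \<le> ?x \<bullet> q - f ?x"
    using assms(2)[of ?x] by linarith
  finally show ?thesis
    using convex_conjugate_ge[of ?x q f] by (meson ereal_less_eq(3) order_trans)
qed

lemma Gstar_fun_eq_convex_conjugate:
  "Gstar_fun \<gamma> Pi_set \<theta> v z = convex_conjugate (G_fun \<gamma> Pi_set \<theta> v z)"
  by (simp add: fun_eq_iff Gstar_fun_def convex_conjugate_def)

lemma inner_le_half_sum_squares: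
  fixes x y :: "'a::real_inner"
  shows "x \<bullet> y \<le> ((norm x)\<^sup>2 + (norm y)\<^sup>2) / 2"
proof -
  have "0 \<le> (norm (x - y))\<^sup>2" by simp
  also have "\<dots> = (norm x)\<^sup>2 - 2 * (x \<bullet> y) + (norm y)\<^sup>2"
    by (simp add: power2_norm_eq_inner inner_diff inner_commute)
  finally show ?thesis by simp
qed

lemma F_fun_le_half_norm_sq:
  assumes "\<gamma> > 0" and "0 \<in> Pi_set"
  shows "F_fun \<gamma> Pi_set \<theta> v z \<le> (norm z)\<^sup>2 / 2"
proof -
  let ?x = "z + \<theta> v"
  have "infdist ((1 / \<gamma>) *\<^sub>R ?x) Pi_set \<le> dist ((1 / \<gamma>) *\<^sub>R ?x) 0"
    using assms(2) by (rule infdist_le)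
  also have "\<dots> = norm ?x / \<gamma>"
    using assms(1) by simp
  finally have "\<gamma> * infdist ((1 / \<gamma>) *\<^sub>R ?x) Pi_set \<le> norm ?x"
    using assms(1) by (simp add: field_simps)
  then have "(\<gamma> * infdist ((1 / \<gamma>) *\<^sub>R ?x) Pi_set)\<^sup>2 \<le> (norm ?x)\<^sup>2"
    by (rule power_mono) (meson assms(1) infdist_nonneg less_imp_le mult_nonneg_nonneg)
  then show ?thesis
    unfolding F_fun_def by (simp add: power_mult_distrib)
qed

lemma F_fun_ge: "- (z \<bullet> \<theta> v) - (norm (\<theta> v))\<^sup>2 / 2 \<le> F_fun \<gamma> Pi_set \<theta> v z"
proof -
  have "0 \<le> \<gamma>\<^sup>2 * (infdist ((1 / \<gamma>) *\<^sub>R (z + \<theta> v)) Pi_set)\<^sup>2"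
    by simp
  then show ?thesis
    using dot_norm[of z "\<theta> v"] unfolding F_fun_def by argo
qed

lemma abs_F_fun_increment_le:
  assumes "\<gamma> > 0" and "0 \<in> Pi_set"
  shows "\<bar>F_fun \<gamma> Pi_set \<theta> v (z + w) - F_fun \<gamma> Pi_set \<theta> v z\<bar>
    \<le> (norm w)\<^sup>2 + 2 * ((norm z)\<^sup>2 + (norm (\<theta> v))\<^sup>2)"
proof -
  let ?F = "F_fun \<gamma> Pi_set \<theta> v" and ?t = "\<theta> v"
  have "?F (z + w) - ?F z \<le> (norm (z + w))\<^sup>2 / 2 + z \<bullet> ?t + (norm ?t)\<^sup>2 / 2"
    using F_fun_le_half_norm_sq[OF assms, of \<theta> v "z + w"] F_fun_ge[of z \<theta> v \<gamma> Pi_set] by simp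
  moreover have "?F z - ?F (z + w) \<le> (norm z)\<^sup>2 / 2 + z \<bullet> ?t + w \<bullet> ?t + (norm ?t)\<^sup>2 / 2"
    using F_fun_le_half_norm_sq[OF assms, of \<theta> v z] F_fun_ge[of "z + w" \<theta> v \<gamma> Pi_set]
    by (simp add: inner_add_left)
  ultimately show ?thesis
    using inner_le_half_sum_squares[of z w] inner_le_half_sum_squares[of z ?t]
      inner_le_half_sum_squares[of w ?t] dot_norm[of z w] zero_le_power2[of "norm z"] zero_le_power2[of "norm ?t"]
      zero_le_power2[of "norm w"]
    unfolding abs_le_iff by argo
qed

lemma abs_G_fun_le:
  assumes "\<gamma> > 0" and "0 \<in> Pi_set"
  shows "\<bar>G_fun \<gamma> Pi_set \<theta> v z zb\<bar>
    \<le> \<gamma> * (norm zb)\<^sup>2 + 2 / \<gamma> * ((norm z)\<^sup>2 + (norm (\<theta> v))\<^sup>2)"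
proof -
  have "\<bar>G_fun \<gamma> Pi_set \<theta> v z zb\<bar>
      \<le> ((norm (\<gamma> *\<^sub>R zb))\<^sup>2 + 2 * ((norm z)\<^sup>2 + (norm (\<theta> v))\<^sup>2)) / \<gamma>"
    using abs_F_fun_increment_le[OF assms, of \<theta> v z "\<gamma> *\<^sub>R zb"] assms(1)
    unfolding G_fun_def by (simp add: divide_right_mono)
  also have "\<dots> = \<gamma> * (norm zb)\<^sup>2 + 2 / \<gamma> * ((norm z)\<^sup>2 + (norm (\<theta> v))\<^sup>2)"
    using assms(1) by (simp add: power_mult_distrib field_simps power2_eq_square)
  finally show ?thesis .
qed

theorem lemma10:
  fixes \<gamma> :: real and Pi_set :: "'a::euclidean_space set" and \<theta> :: "'a \<Rightarrow> 'a"
  assumes "\<gamma> > 0" and "closed Pi_set" and "convex Pi_set" and "0 \<in> Pi_set"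
  shows "(\<forall>v z zb.
            - \<gamma> * (norm zb)^2 - 2/\<gamma> * ((norm z)^2 + (norm (\<theta> v))^2) \<le> G_fun \<gamma> Pi_set \<theta> v z zb
          \<and> G_fun \<gamma> Pi_set \<theta> v z zb \<le> \<gamma> * (norm zb)^2 + 2/\<gamma> * ((norm z)^2 + (norm (\<theta> v))^2))
       \<and> (\<forall>v z. ereal_convex_fun (\<lambda>q. Gstar_fun \<gamma> Pi_set \<theta> v z q))
       \<and> (\<forall>v z q. Gstar_fun \<gamma> Pi_set \<theta> v z q \<ge>
            ereal (max 0 ((norm q)^2 / (4*\<gamma>) - 2/\<gamma> * ((norm z)^2 + (norm (\<theta> v))^2))))"
proof (intro conjI allI)
  fix v z zb :: 'a
  show "- \<gamma> * (norm zb)^2 - 2/\<gamma> * ((norm z)^2 + (norm (\<theta> v))^2) \<le> G_fun \<gamma> Pi_set \<theta> v z zb"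
    and "G_fun \<gamma> Pi_set \<theta> v z zb \<le> \<gamma> * (norm zb)^2 + 2/\<gamma> * ((norm z)^2 + (norm (\<theta> v))^2)"
    using abs_G_fun_le[OF assms(1,4), of \<theta> v z zb] by (simp_all add: abs_le_iff)
next
  fix v z :: 'a
  show "ereal_convex_fun (\<lambda>q. Gstar_fun \<gamma> Pi_set \<theta> v z q)"
    using ereal_convex_fun_convex_conjugate by (simp add: Gstar_fun_eq_convex_conjugate)
next
  fix v z q :: 'a
  have "0 \<le> convex_conjugate (G_fun \<gamma> Pi_set \<theta> v z) q"
    by (rule convex_conjugate_nonneg) (simp add: G_fun_def)
  moreover have "ereal ((norm q)^2 / (4*\<gamma>) - 2/\<gamma> * ((norm z)^2 + (norm (\<theta> v))^2))
      \<le> convex_conjugate (G_fun \<gamma> Pi_set \<theta> v z) q"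
  proof (rule convex_conjugate_ge_quadratic[OF assms(1)])
    fix zb
    show "G_fun \<gamma> Pi_set \<theta> v z zb \<le> \<gamma> * (norm zb)^2 + 2/\<gamma> * ((norm z)^2 + (norm (\<theta> v))^2)"
      using abs_G_fun_le[OF assms(1,4), of \<theta> v z zb] by linarith
  qed
  ultimately show "ereal (max 0 ((norm q)^2 / (4*\<gamma>) - 2/\<gamma> * ((norm z)^2 + (norm (\<theta> v))^2)))
      \<le> Gstar_fun \<gamma> Pi_set \<theta> v z q"
    by (simp add: Gstar_fun_eq_convex_conjugate max_def zero_ereal_def)
qed

end
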